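(* Let $q(m)$ be the number of partitions of $m$ into distinct parts ($q(0)=1$, $q(m)=0$ for $m<0$) and $s(n)=q(n)-2q(n-1)+q(n-2)$. Call a butterfly partition of $n$ a partition of $n$ into distinct parts $p_1>p_2>\dots>p_k$ with $k\ge 3$, $p_1=p_2+1=p_3+2$ and $p_k\ge 2$, and for $n\ge 6$ let $s_e(n)$ be the number of butterfly partitions of $n$ with $p_2$ even. For an integer $t$ put $P_1(t)=\tfrac12(3t^2+t+4)$, $P_2(t)=\tfrac12(3(t+1)^2-t-1)$, $P_3(t)=\tfrac12(3(t+1)^2-t+3)$, $P_4(t)=\tfrac12(3(t+1)^2+t+1)$. Then for every integer $n\ge 6$: (a) if $n\notin\{P_1(t),P_2(t),P_3(t),P_4(t)\}$ for every integer $t\ge 2$, then $s(n)=2s_e(n)$, in particular $s(n)$ is even; (b) if $n=P_1(t)$ or $n=P_4(t)$ for some integer $t\ge2$, then $s(n)=2s_e(n)+1$, in particular $s(n)$ is odd; (c) if $n=P_2(t)$ or $n=P_3(t)$ for some integer $t\ge 2$, then $s(n)=2s_e(n)-1$, in particular $s(n)$ is odd. *)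

theory Defs
  imports Main
begin

text \<open>A partition of m into distinct parts is identified with the finite set of its
  (positive) parts, whose sum is m.\<close>
definition distinct_partitions :: "nat \<Rightarrow> nat set set" where
  "distinct_partitions m = {A. finite A \<and> 0 \<notin> A \<and> \<Sum>A = m}"

definition q :: "int \<Rightarrow> nat" where
  "q m = (if m < 0 then 0 else card (distinct_partitions (nat m)))"

definition s :: "int \<Rightarrow> int" where
  "s n = int (q n) - 2 * int (q (n - 1)) + int (q (n - 2))"

text \<open>The parts in decreasing order p_1 > p_2 > ... > p_k (list index i-1 is p_i).\<close>
definition parts :: "nat set \<Rightarrow> nat list" where
  "parts A = rev (sorted_list_of_set A)"

definition butterfly :: "nat \<Rightarrow> nat set \<Rightarrow> bool" where
  "butterfly n A \<longleftrightarrow> A \<in> distinct_partitions n \<and> card A \<ge> 3 \<and>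
     parts A ! 0 = parts A ! 1 + 1 \<and> parts A ! 0 = parts A ! 2 + 2 \<and>
     parts A ! (card A - 1) \<ge> 2"

definition s_e :: "nat \<Rightarrow> nat" where
  "s_e n = card {A. butterfly n A \<and> even (parts A ! 1)}"

definition P1 :: "int \<Rightarrow> int" where "P1 t = (3 * t^2 + t + 4) div 2"
definition P2 :: "int \<Rightarrow> int" where "P2 t = (3 * (t + 1)^2 - t - 1) div 2"
definition P3 :: "int \<Rightarrow> int" where "P3 t = (3 * (t + 1)^2 - t + 3) div 2"
definition P4 :: "int \<Rightarrow> int" where "P4 t = (3 * (t + 1)^2 + t + 1) div 2"

end

theory Submission
  imports Defs "HOL-Computational_Algebra.Polynomial"
begin

text \<open>
  Write G(c, i) for the product of (1 + x^k) over c <= k < c + i. Since q is read off from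
  G(1, N), s(n) is the n-th coefficient of (1 - x)^2 G(1, n + 2), and a ring identity turns
  this coefficient into that of the sum of x^(3i+9) G(2, i). The latter generates exactly the
  butterfly partitions with p_2 = i + 3, so s(n) counts butterfly partitions and
  s(n) - 2 s_e(n) is the alternating count of butterfly partitions by p_2, i.e. the n-th
  coefficient of x^9 times the alternating series sum_i (-x^3)^i G(2, i). Peeling factors
  off this series shows that, to any order, it agrees with the lacunary series
  x^9 - x^12 (1 + x^2) sum_u x^(e u) (1 - x^(u+3)), where 2 e(u) = 3u^2 + 17u. Its
  exponents are the values P_1(t), ..., P_4(t) for t >= 2 (with 9 = P_1(2)), with sign +
  for P_1, P_4 and - for P_2, P_3; they are pairwise distinct, which yields the corrections.
\<close>

section \<open>Generating functions in a commutative ring\<close>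

context
  fixes x :: "'a :: comm_ring_1"
begin

definition distinct_gf :: "nat \<Rightarrow> nat \<Rightarrow> 'a" where
  "distinct_gf c i = (\<Prod>k\<in>{c..<c+i}. 1 + x^k)"

lemma distinct_gf_0 [simp]: "distinct_gf c 0 = 1"
  by (simp add: distinct_gf_def)

lemma distinct_gf_Suc: "distinct_gf c (Suc i) = distinct_gf c i * (1 + x^(c+i))"
  by (simp add: distinct_gf_def)

lemma distinct_gf_Suc_left: "distinct_gf c (Suc i) = (1 + x^c) * distinct_gf (c + 1) i"
proof -
  have "{c..<c + Suc i} = insert c {c + 1..<c + 1 + i}" by auto
  then show ?thesis by (simp add: distinct_gf_def)
qed

text \<open>
  x^(2i+3) G(1, i) generates the partitions into distinct parts whose two largest parts are
  i + 2 and i + 1; x^(2i+5) G(2, i) those whose two largest parts are i + 3 and i + 2 and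
  whose parts are all at least 2; and x^(3i+9) G(2, i) the butterfly partitions with
  p_2 = i + 3.
\<close>

definition consec2_gf :: "nat \<Rightarrow> 'a" where
  "consec2_gf L = (\<Sum>i<L. x^(2*i+3) * distinct_gf 1 i)"

definition consec2_ge2_gf :: "nat \<Rightarrow> 'a" where
  "consec2_ge2_gf L = (\<Sum>i<L. x^(2*i+5) * distinct_gf 2 i)"

definition butterfly_gf :: "nat \<Rightarrow> 'a" where
  "butterfly_gf L = (\<Sum>i<L. x^(3*i+9) * distinct_gf 2 i)"

lemma one_minus_x_distinct_gf:
  "(1 - x) * distinct_gf 1 (Suc L) = 1 + consec2_gf L - x^(L+2) * distinct_gf 1 L"
proof (induction L)
  case 0
  then show ?case by (simp add: consec2_gf_def distinct_gf_Suc algebra_simps power2_eq_square)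
next
  case (Suc L)
  have "(1 - x) * distinct_gf 1 (Suc (Suc L))
      = (1 - x) * distinct_gf 1 (Suc L) + x^(L+2) * (1 - x) * distinct_gf 1 (Suc L)"
    by (simp add: distinct_gf_Suc algebra_simps)
  also have "\<dots> = 1 + consec2_gf (Suc L) - x^(Suc L + 2) * distinct_gf 1 (Suc L)"
    unfolding Suc consec2_gf_def
    by (simp add: distinct_gf_Suc algebra_simps power_add power_mult power2_eq_square power3_eq_cube)
  finally show ?case .
qed

lemma consec2_gf_Suc: "consec2_gf (Suc L) = x^3 + (1 + x) * consec2_ge2_gf L"
proof -
  have summand:
    "x^(2 * Suc i + 3) * distinct_gf 1 (Suc i) = (1 + x) * (x^(2*i+5) * distinct_gf 2 i)" for i
    using distinct_gf_Suc_left[of 1 i, unfolded one_add_one power_one_right]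
    by (simp add: power_add mult_ac)
  show ?thesis
    unfolding consec2_gf_def consec2_ge2_gf_def sum.lessThan_Suc_shift summand sum_distrib_left
    by simp
qed

lemma consec2_ge2_gf_Suc:
  "consec2_ge2_gf (Suc L) = x^5 + x^2 * consec2_ge2_gf L + butterfly_gf L"
proof -
  have summand: "x^(2 * Suc i + 5) * distinct_gf 2 (Suc i)
      = x^2 * (x^(2*i+5) * distinct_gf 2 i) + x^(3*i+9) * distinct_gf 2 i" for i
    by (simp add: distinct_gf_Suc power_add power_mult mult.commute[of 2] mult.commute[of 3])
      (simp add: algebra_simps eval_nat_numeral)
  show ?thesis
    unfolding consec2_ge2_gf_def butterfly_gf_def sum.lessThan_Suc_shift summand sum_distrib_left
      sum.distrib by simp
qed

lemma one_minus_x_sq_distinct_gf: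
  "(1 - x)^2 * distinct_gf 1 (L+2) = 1 - x + x^3 - x^4 + x^5 + butterfly_gf L
     - x^(L+3) * (x^(L+2) * distinct_gf 2 L + (1 - x) * distinct_gf 1 (L+1))"
proof -
  have first: "(1 - x) * distinct_gf 1 (L+2)
      = 1 + x^3 + (1 + x) * consec2_ge2_gf L - x^(L+3) * distinct_gf 1 (L+1)"
    using one_minus_x_distinct_gf[of "Suc L"] by (simp add: consec2_gf_Suc power_add eval_nat_numeral)
  have second: "(1 - x^2) * consec2_ge2_gf L = x^5 + butterfly_gf L - x^(2*L+5) * distinct_gf 2 L"
    using consec2_ge2_gf_Suc[of L] by (simp add: consec2_ge2_gf_def algebra_simps)
  have "(1 - x)^2 * distinct_gf 1 (L+2) = (1 - x) * ((1 - x) * distinct_gf 1 (L+2))"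
    by (simp add: power2_eq_square)
  also have "\<dots> = (1 - x) * (1 + x^3) + (1 - x^2) * consec2_ge2_gf L
      - (1 - x) * x^(L+3) * distinct_gf 1 (L+1)"
    unfolding first by (simp add: algebra_simps power2_eq_square)
  also have "\<dots> = 1 - x + x^3 - x^4 + x^5 + butterfly_gf L
     - x^(L+3) * (x^(L+2) * distinct_gf 2 L + (1 - x) * distinct_gf 1 (L+1))"
    unfolding second by (simp add: algebra_simps power_add eval_nat_numeral)
  finally show ?thesis .
qed

section \<open>The alternating series\<close>

definition pent_exp :: "nat \<Rightarrow> nat \<Rightarrow> nat" where
  "pent_exp c u = (\<Sum>j<u. 3 * (c + j) + 1)"

lemma pent_exp_Suc: "pent_exp c (Suc u) = pent_exp c u + 3 * (c + u) + 1"
  by (simp add: pent_exp_def)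

lemma pent_exp_ge: "u \<le> pent_exp c u"
  by (induction u) (simp_all add: pent_exp_Suc pent_exp_def)

lemma pent_exp_gap: "u < v \<Longrightarrow> pent_exp c u + 3 * (c + u) + 1 \<le> pent_exp c v"
proof (induction v)
  case (Suc v)
  then show ?case
    by (cases "u = v") (auto simp: pent_exp_Suc)
qed simp

lemma strict_mono_pent_exp: "strict_mono (pent_exp c)"
  by (rule strict_monoI) (drule pent_exp_gap[where c = c], simp)

lemma pent_exp_closed_form: "2 * int (pent_exp c u) = 3 * int u ^ 2 + (6 * int c - 1) * int u"
  by (induction u) (simp_all add: pent_exp_Suc algebra_simps power2_eq_square pent_exp_def)

lemma dvd_diff_trans:
  fixes a b c d :: "'a :: comm_ring_1"
  assumes "d dvd a - b" and "d dvd b - c"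
  shows "d dvd a - c"
  using dvd_add[OF assms] by simp

text \<open>
  The truncation at N of the series sum_i (-x^t)^i G(c, i). Congruences modulo x^D are
  stated as divisibilities x^D dvd a - b, so everything holds in any commutative ring.
\<close>

definition alt_sum :: "nat \<Rightarrow> nat \<Rightarrow> nat \<Rightarrow> 'a" where
  "alt_sum c t N = (\<Sum>i<N. (- (x^t))^i * distinct_gf c i)"

lemma alt_sum_Suc_first_factor:
  "alt_sum c t (Suc N) = 1 - x^t * (1 + x^c) * alt_sum (c + 1) t N"
proof -
  have summand: "(- (x^t))^(Suc i) * distinct_gf c (Suc i)
      = - (x^t * (1 + x^c) * ((- (x^t))^i * distinct_gf (c + 1) i))" for i
    by (simp add: distinct_gf_Suc_left)
  show ?thesis
    unfolding alt_sum_def sum.lessThan_Suc_shift summand sum_distrib_left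
    by (simp add: sum_negf)
qed

lemma alt_sum_Suc_last_factor:
  "alt_sum c t (Suc N) = 1 - x^t * alt_sum c t N - x^(t+c) * alt_sum c (t + 1) N"
proof -
  have summand: "(- (x^t))^(Suc i) * distinct_gf c (Suc i)
      = - (x^t * ((- (x^t))^i * distinct_gf c i)) - x^(t+c) * ((- (x^(t+1)))^i * distinct_gf c i)" for i
  proof -
    have "(- (x^(t+1)))^i = (- (x^t))^i * x^i"
      by (simp add: power_mult_distrib[symmetric] mult.commute)
    then show ?thesis
      by (simp add: distinct_gf_Suc algebra_simps power_add)
  qed
  show ?thesis
    unfolding alt_sum_def sum.lessThan_Suc_shift summand sum_distrib_left
    by (simp add: sum_subtractf sum_negf)
qed

lemma alt_sum_trunc:
  assumes "N \<le> M"
  shows "x^(t*N) dvd alt_sum c t M - alt_sum c t N"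
  using assms
proof (induction M rule: dec_induct)
  case base
  then show ?case by simp
next
  case (step M)
  have "x^(t*N) dvd x^(t*M)"
    using \<open>N \<le> M\<close> by (simp add: le_imp_power_dvd)
  moreover have "(- (x^t))^M = (-1)^M * x^(t*M)"
    by (subst power_minus) (simp add: power_mult)
  ultimately have "x^(t*N) dvd (- (x^t))^M * distinct_gf c M"
    by simp
  moreover have "alt_sum c t (Suc M) - alt_sum c t N
      = (alt_sum c t M - alt_sum c t N) + (- (x^t))^M * distinct_gf c M"
    by (simp add: alt_sum_def)
  ultimately show ?case
    using step.IH by (metis dvd_add)
qed

lemma dvd_cancel_one_plus_power:
  assumes "1 \<le> c" and "x^D dvd (1 + x^c) * a"
  shows "x^D dvd a"
proof -
  have geom: "(1 + x^c) * (\<Sum>j<D. (- (x^c))^j) = 1 - (- (x^c))^D"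
    using one_diff_power_eq[of "- (x^c)" D] by simp
  have "x^D dvd x^(c*D)"
    using assms(1) by (simp add: le_imp_power_dvd)
  moreover have "(- (x^c))^D = (-1)^D * x^(c*D)"
    by (subst power_minus) (simp add: power_mult)
  ultimately have "x^D dvd (- (x^c))^D * a"
    by simp
  then have "x^D dvd (1 + x^c) * a * (\<Sum>j<D. (- (x^c))^j) + (- (x^c))^D * a"
    using assms(2) by simp
  also have "(1 + x^c) * a * (\<Sum>j<D. (- (x^c))^j) + (- (x^c))^D * a
      = a * ((1 + x^c) * (\<Sum>j<D. (- (x^c))^j) + (- (x^c))^D)"
    by (simp add: algebra_simps)
  also have "\<dots> = a"
    unfolding geom by simp
  finally show ?thesis .
qed

lemma alt_sum_diag_step:
  assumes "1 \<le> c" and "D \<le> N"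
  shows "x^D dvd alt_sum c c N - (1 - x^c + x^(3*c+1) * alt_sum (c + 1) (c + 1) N)"
proof (rule dvd_cancel_one_plus_power[OF assms(1)])
  \<comment> \<open>Modulo x^D, peeling the last factor gives (1 + x^c) h = 1 - x^(2c) g, and peeling
    the first factor gives g = 1 - x^(c+1) (1 + x^c) alt_sum (c + 1) (c + 1) N; so both sides
    carry the factor 1 + x^c.\<close>
  let ?h = "alt_sum c c N" and ?g = "alt_sum c (c + 1) N"
  have "D \<le> c * N" "D \<le> (c + 1) * N"
    using assms mult_le_mono[of 1 c D N] by simp_all
  then have "x^D dvd alt_sum c c (Suc N) - ?h" "x^D dvd alt_sum c (c + 1) (Suc N) - ?g"
    by (meson alt_sum_trunc dvd_trans le_imp_power_dvd le_SucI order_refl)+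
  then have "x^D dvd (alt_sum c c (Suc N) - ?h) - x^(c+c) * (alt_sum c (c + 1) (Suc N) - ?g)"
    by (simp add: dvd_diff)
  also have "(alt_sum c c (Suc N) - ?h) - x^(c+c) * (alt_sum c (c + 1) (Suc N) - ?g)
      = - ((1 + x^c) * (?h - (1 - x^c + x^(3*c+1) * alt_sum (c + 1) (c + 1) N)))"
    unfolding alt_sum_Suc_last_factor[of c c] alt_sum_Suc_first_factor[of c "c + 1"]
    by (simp add: algebra_simps power_add mult_2 numeral_3_eq_3)
  finally show "x^D dvd (1 + x^c) * (?h - (1 - x^c + x^(3*c+1) * alt_sum (c + 1) (c + 1) N))"
    by simp
qed

lemma alt_sum_diag_iter:
  assumes "1 \<le> c" and "D \<le> N"
  shows "x^D dvd alt_sum c c N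
    - ((\<Sum>u<U. x^(pent_exp c u) * (1 - x^(c+u))) + x^(pent_exp c U) * alt_sum (c+U) (c+U) N)"
proof (induction U)
  case 0
  then show ?case by (simp add: pent_exp_def)
next
  case (Suc U)
  let ?S = "\<lambda>U. \<Sum>u<U. x^(pent_exp c u) * (1 - x^(c+u))"
  let ?F = "\<lambda>U. alt_sum (c+U) (c+U) N"
  have "x^D dvd x^(pent_exp c U) * (?F U - (1 - x^(c+U) + x^(3*(c+U)+1) * ?F (Suc U)))"
    using alt_sum_diag_step[of "c+U" D N] assms by simp
  also have "x^(pent_exp c U) * (?F U - (1 - x^(c+U) + x^(3*(c+U)+1) * ?F (Suc U)))
      = (?S U + x^(pent_exp c U) * ?F U) - (?S (Suc U) + x^(pent_exp c (Suc U)) * ?F (Suc U))"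
    by (simp add: pent_exp_Suc algebra_simps power_add mult_2 numeral_3_eq_3)
  finally show ?case
    using Suc.IH dvd_diff_trans by blast
qed

lemma alt_sum_diag_trunc:
  assumes "1 \<le> c" and "D \<le> N"
  shows "x^D dvd alt_sum c c N - (\<Sum>u<D. x^(pent_exp c u) * (1 - x^(c+u)))"
proof -
  have "x^D dvd x^(pent_exp c D) * alt_sum (c+D) (c+D) N"
    by (simp add: le_imp_power_dvd pent_exp_ge)
  then have "x^D dvd ((\<Sum>u<D. x^(pent_exp c u) * (1 - x^(c+u)))
      + x^(pent_exp c D) * alt_sum (c+D) (c+D) N) - (\<Sum>u<D. x^(pent_exp c u) * (1 - x^(c+u)))"
    by simp
  with alt_sum_diag_iter[OF assms, of D] show ?thesis
    using dvd_diff_trans by blast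
qed

lemma alt_sum_2_3_trunc:
  assumes "1 \<le> n"
  shows "x^(n+1) dvd alt_sum 2 3 n
    - (1 - x^3 * (1 + x^2) * (\<Sum>u<n+1. x^(pent_exp 3 u) * (1 - x^(3+u))))"
proof -
  let ?S = "\<Sum>u<n+1. x^(pent_exp 3 u) * (1 - x^(3+u))"
  have "x^(n+1) dvd x^(3*n)"
    using assms by (intro le_imp_power_dvd) simp
  then have "x^(n+1) dvd alt_sum 2 3 (n+2) - alt_sum 2 3 n"
    using alt_sum_trunc[of n "n+2" 3 2] by (rule dvd_trans) simp
  moreover have "x^(n+1) dvd alt_sum 3 3 (n+1) - ?S"
    using alt_sum_diag_trunc[of 3 "n+1" "n+1"] by simp
  ultimately have "x^(n+1) dvd x^3 * (1 + x^2) * (alt_sum 3 3 (n+1) - ?S)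
      + (alt_sum 2 3 (n+2) - alt_sum 2 3 n)"
    by simp
  also have "x^3 * (1 + x^2) * (alt_sum 3 3 (n+1) - ?S) + (alt_sum 2 3 (n+2) - alt_sum 2 3 n)
      = - (alt_sum 2 3 n - (1 - x^3 * (1 + x^2) * ?S))"
  proof -
    have three: "(2::nat) + 1 = 3" by simp
    show ?thesis
      using alt_sum_Suc_first_factor[of 2 3 "n+1", unfolded three] by (simp add: algebra_simps)
  qed
  finally show ?thesis
    unfolding dvd_minus_iff .
qed

lemma alt_butterfly_sum_trunc:
  assumes "1 \<le> n"
  shows "x^(n+1) dvd (\<Sum>i<n. (-1)^i * (x^(3*i+9) * distinct_gf 2 i))
    - (x^9 - (\<Sum>u<n+1. x^(pent_exp 3 u + 12) + x^(pent_exp 3 u + 14)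
                         - x^(pent_exp 3 u + u + 15) - x^(pent_exp 3 u + u + 17)))"
proof -
  let ?S = "\<Sum>u<n+1. x^(pent_exp 3 u) * (1 - x^(3+u))"
  have alt: "(\<Sum>i<n. (-1)^i * (x^(3*i+9) * distinct_gf 2 i)) = x^9 * alt_sum 2 3 n"
    unfolding alt_sum_def sum_distrib_left
    by (rule sum.cong) (simp_all add: power_minus[of "x^3"] power_mult[symmetric] power_add mult_ac)
  have expand: "x^9 * (x^3 * (1 + x^2) * ?S) = (\<Sum>u<n+1. x^(pent_exp 3 u + 12)
      + x^(pent_exp 3 u + 14) - x^(pent_exp 3 u + u + 15) - x^(pent_exp 3 u + u + 17))"
    unfolding sum_distrib_left
    by (rule sum.cong) (simp_all add: algebra_simps power_add eval_nat_numeral)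
  have "x^(n+1) dvd x^9 * (alt_sum 2 3 n - (1 - x^3 * (1 + x^2) * ?S))"
    using alt_sum_2_3_trunc[OF assms] by (rule dvd_mult)
  then show ?thesis
    unfolding alt right_diff_distrib[of "x^9"] right_diff_distrib[of "x^9" 1] expand by simp
qed

end

section \<open>Coefficients\<close>

lemma coeff_sum_monom:
  assumes "finite S"
  shows "coeff (\<Sum>s\<in>S. monom (1 :: 'a :: comm_semiring_1) (f s)) n
    = of_nat (card {s\<in>S. f s = n})"
proof -
  have "coeff (\<Sum>s\<in>S. monom (1 :: 'a) (f s)) n = (\<Sum>s\<in>S. of_bool (f s = n))"
    by (simp add: coeff_sum coeff_monom of_bool_def)
  also have "\<dots> = of_nat (card {s\<in>S. f s = n})"
    using assms by (simp add: Int_def conj_commute)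
  finally show ?thesis .
qed

lemma distinct_gf_monom:
  "distinct_gf (monom (1 :: 'a :: comm_ring_1) 1) c i = (\<Sum>C\<in>Pow {c..<c+i}. monom 1 (\<Sum>C))"
proof -
  have "distinct_gf (monom (1 :: 'a) 1) c i = (\<Prod>k\<in>{c..<c+i}. monom 1 k + 1)"
    by (simp add: distinct_gf_def monom_power add.commute)
  also have "\<dots> = (\<Sum>C\<in>Pow {c..<c+i}. \<Prod>k\<in>C. monom 1 k)"
    by (simp add: prod_add)
  also have "\<dots> = (\<Sum>C\<in>Pow {c..<c+i}. monom 1 (\<Sum>C))"
  proof (rule sum.cong)
    show "(\<Prod>k\<in>C. monom (1 :: 'a) k) = monom 1 (\<Sum>C)" for C :: "nat set"
      by (induction C rule: infinite_finite_induct) (simp_all add: mult_monom)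
  qed simp
  finally show ?thesis .
qed

lemma coeff_monom_mult_distinct_gf:
  "coeff (monom 1 m * distinct_gf (monom (1 :: 'a :: comm_ring_1) 1) c i) n
     = of_nat (card {C\<in>Pow {c..<c+i}. \<Sum>C + m = n})"
  unfolding distinct_gf_monom sum_distrib_left mult_monom by (simp add: coeff_sum_monom add.commute)

lemma coeff_sum_monom_strict_mono:
  assumes "strict_mono f"
  shows "coeff (\<Sum>u<n+1. monom (1 :: 'a :: comm_semiring_1) (f u)) n = of_bool (n \<in> range f)"
proof -
  have "card {u\<in>{..<n+1}. f u = n} = of_bool (n \<in> range f)"
  proof (cases "n \<in> range f")
    case True
    then obtain v where "n = f v"
      by blast
    then have "{u\<in>{..<n+1}. f u = n} = {v}"
      using strict_mono_imp_increasing[OF assms, of v] strict_mono_eq[OF assms] by auto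
    then show ?thesis
      using True by simp
  qed auto
  then show ?thesis
    by (simp only: coeff_sum_monom[OF finite_lessThan] of_nat_of_bool)
qed

lemma coeff_neg_one_power_mult:
  "coeff ((-1)^i * p) n = (-1)^i * coeff (p :: 'a :: comm_ring_1 poly) n"
  by (cases "even i") simp_all

lemma q_eq_coeff_distinct_gf:
  assumes "k \<le> N"
  shows "int (q (int k)) = coeff (distinct_gf (monom 1 1) 1 N) k"
proof -
  have "distinct_partitions k = {C\<in>Pow {1..<1+N}. \<Sum>C + 0 = k}"
  proof (intro equalityI subsetI)
    fix C assume "C \<in> distinct_partitions k"
    then have C: "finite C" "0 \<notin> C" "\<Sum>C = k"
      by (auto simp: distinct_partitions_def)
    have "y \<in> {1..<1+N}" if "y \<in> C" for y
      using member_le_sum[of y C id] C that assms by (cases y) auto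
    with C show "C \<in> {C\<in>Pow {1..<1+N}. \<Sum>C + 0 = k}"
      by auto
  next
    fix C assume "C \<in> {C\<in>Pow {1..<1+N}. \<Sum>C + 0 = k}"
    then show "C \<in> distinct_partitions k"
      by (auto simp: distinct_partitions_def intro: finite_subset)
  qed
  then show ?thesis
    using coeff_monom_mult_distinct_gf[where 'a=int, of 0 1 N k] by (simp add: q_def)
qed

lemma s_eq_sum_butterfly_coeffs:
  assumes "6 \<le> n"
  shows "s (int n) = (\<Sum>i<n. coeff (monom 1 (3*i+9) * distinct_gf (monom 1 1) 2 i) n)"
proof -
  define X :: "int poly" where "X = monom 1 1"
  define G where "G = distinct_gf X 1 (n+2)"
  have X_power: "X^k = monom 1 k" for k
    by (simp add: X_def monom_power)
  have "(1 - X)^2 * G = G - X^1 * G - X^1 * G + X^2 * G"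
    unfolding power2_diff by (simp add: algebra_simps)
  then have "coeff ((1 - X)^2 * G) n = coeff G n - 2 * coeff G (n - 1) + coeff G (n - 2)"
    using assms by (simp only: X_power coeff_add coeff_diff coeff_monom_mult) simp
  also have "\<dots> = s (int n)"
  proof -
    have "int (q (int (n - k))) = coeff G (n - k)" for k
      unfolding G_def X_def by (rule q_eq_coeff_distinct_gf) simp
    from this[of 0] this[of 1] this[of 2] show ?thesis
      using assms by (simp add: s_def of_nat_diff)
  qed
  finally have "s (int n) = coeff ((1 - X)^2 * G) n" ..
  also have "\<dots> = coeff (butterfly_gf X n) n"
  proof -
    have "coeff (1 - X + X^3 - X^4 + X^5) n = 0"
      using assms by (simp add: X_def monom_power coeff_monom)
    moreover have "coeff (X^(n+3) * R) n = 0" for R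
      by (simp add: X_power coeff_monom_mult)
    ultimately show ?thesis
      unfolding G_def one_minus_x_sq_distinct_gf coeff_diff coeff_add by simp
  qed
  also have "\<dots> = (\<Sum>i<n. coeff (monom 1 (3*i+9) * distinct_gf (monom 1 1) 2 i) n)"
    unfolding butterfly_gf_def coeff_sum X_def by (simp add: monom_power)
  finally show ?thesis .
qed

lemma alt_sum_butterfly_coeffs:
  assumes "1 \<le> n"
  shows "(\<Sum>i<n. (-1)^i * coeff (monom 1 (3*i+9) * distinct_gf (monom 1 1) 2 i) n :: int)
    = of_bool (n = 9) + of_bool (n \<in> range (\<lambda>u. pent_exp 3 u + u + 17))
      + of_bool (n \<in> range (\<lambda>u. pent_exp 3 u + u + 15))
      - of_bool (n \<in> range (\<lambda>u. pent_exp 3 u + 12))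
      - of_bool (n \<in> range (\<lambda>u. pent_exp 3 u + 14))"
proof -
  let ?X = "monom (1 :: int) 1"
  let ?e = "pent_exp 3"
  have mono: "strict_mono (\<lambda>u. ?e u + k)" "strict_mono (\<lambda>u. ?e u + u + k)" for k
  proof -
    show "strict_mono (\<lambda>u. ?e u + k)"
      using strict_mono_pent_exp[of 3] by (simp add: strict_mono_def)
    show "strict_mono (\<lambda>u. ?e u + u + k)"
      using strict_mono_pent_exp[of 3] by (simp add: strict_mono_def add_less_mono)
  qed
  let ?P = "\<Sum>i<n. (-1)^i * (?X^(3*i+9) * distinct_gf ?X 2 i)"
  let ?Q = "?X^9 - (\<Sum>u<n+1. ?X^(?e u + 12) + ?X^(?e u + 14) - ?X^(?e u + u + 15) - ?X^(?e u + u + 17))"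
  have "?X^(n+1) dvd ?P - ?Q"
    by (rule alt_butterfly_sum_trunc[OF assms])
  then have "\<forall>k<n+1. coeff (?P - ?Q) k = 0"
    by (simp only: monom_power monom_1_dvd_iff' power_one mult_1)
  then have "coeff ?P n = coeff ?Q n"
    by simp
  moreover have "coeff ?P n = (\<Sum>i<n. (-1)^i * coeff (monom 1 (3*i+9) * distinct_gf (monom 1 1) 2 i) n)"
    by (simp add: coeff_sum coeff_neg_one_power_mult monom_power)
  moreover have "coeff ?Q n = of_bool (n = 9) + of_bool (n \<in> range (\<lambda>u. ?e u + u + 17))
      + of_bool (n \<in> range (\<lambda>u. ?e u + u + 15))
      - of_bool (n \<in> range (\<lambda>u. ?e u + 12)) - of_bool (n \<in> range (\<lambda>u. ?e u + 14))"
    unfolding sum.distrib sum_subtractf coeff_diff coeff_add monom_power power_one mult_1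
      coeff_sum_monom_strict_mono[OF mono(1)] coeff_sum_monom_strict_mono[OF mono(2)]
    by simp
  ultimately show ?thesis
    by simp
qed

section \<open>Butterfly partitions\<close>

lemma sorted_wrt_parts: "sorted_wrt (>) (parts A)"
  by (simp add: parts_def sorted_wrt_rev)

lemma set_parts: "finite A \<Longrightarrow> set (parts A) = A"
  by (simp add: parts_def)

lemma length_parts: "length (parts A) = card A"
  by (simp add: parts_def)

lemma parts_union_top3:
  assumes "C \<subseteq> {..<i+2}"
  shows "parts (C \<union> {i+2, i+3, i+4}) = [i+4, i+3, i+2] @ rev (sorted_list_of_set C)"
proof -
  have "finite C"
    using assms finite_subset by blast
  have "sorted_list_of_set (C \<union> {i+2, i+3, i+4}) = sorted_list_of_set C @ [i+2, i+3, i+4]"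
  proof (rule strict_sorted_equal)
    show "sorted_wrt (<) (sorted_list_of_set C @ [i+2, i+3, i+4])"
      using assms \<open>finite C\<close> by (auto simp: sorted_wrt_append)
    show "set (sorted_list_of_set (C \<union> {i+2, i+3, i+4}))
        = set (sorted_list_of_set C @ [i+2, i+3, i+4])"
      using \<open>finite C\<close> by (subst set_sorted_list_of_set) auto
  qed simp
  then show ?thesis
    by (simp add: parts_def)
qed

lemma butterfly_union_top3_iff:
  assumes "C \<subseteq> {2..<i+2}"
  shows "butterfly n (C \<union> {i+2, i+3, i+4}) \<longleftrightarrow> \<Sum>C + (3*i+9) = n"
proof -
  let ?A = "C \<union> {i+2, i+3, i+4}"
  have "finite C" "C \<inter> {i+2, i+3, i+4} = {}"
    using assms finite_subset by auto
  then have fin: "finite ?A" and card: "card ?A = card C + 3" and sum: "\<Sum>?A = \<Sum>C + (3*i+9)"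
    by (simp_all add: card_Un_disjoint sum.union_disjoint)
  have "0 \<notin> ?A"
    using assms by auto
  with fin sum have partition: "?A \<in> distinct_partitions n \<longleftrightarrow> \<Sum>C + (3*i+9) = n"
    by (simp add: distinct_partitions_def)
  have parts: "parts ?A = [i+4, i+3, i+2] @ rev (sorted_list_of_set C)"
    using assms by (intro parts_union_top3) auto
  then have top3: "parts ?A ! 0 = parts ?A ! 1 + 1" "parts ?A ! 0 = parts ?A ! 2 + 2"
    by simp_all
  have "parts ?A ! (card ?A - 1) \<in> set (parts ?A)"
    using length_parts[of ?A] card by (intro nth_mem) simp
  then have "parts ?A ! (card ?A - 1) \<ge> 2"
    using set_parts[OF fin] assms by auto
  with partition card top3 show ?thesis
    unfolding butterfly_def by auto
qed

lemma butterfly_parts_ge2: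
  assumes "butterfly n A" and "y \<in> A"
  shows "y \<ge> 2"
proof -
  let ?L = "parts A"
  have fin: "finite A" and card: "card A \<ge> 3"
    using assms(1) by (auto simp: butterfly_def distinct_partitions_def)
  obtain j where j: "j < card A" "y = ?L ! j"
    using assms(2) set_parts[OF fin] length_parts[of A] by (metis in_set_conv_nth)
  have "?L ! (card A - 1) \<le> ?L ! j"
  proof (cases "j = card A - 1")
    case False
    with j(1) have "j < card A - 1"
      by simp
    then show ?thesis
      using sorted_wrt_nth_less[OF sorted_wrt_parts[of A], of j "card A - 1"] length_parts[of A] card
      by simp
  qed simp
  moreover have "?L ! (card A - 1) \<ge> 2"
    using assms(1) by (simp add: butterfly_def)
  ultimately show ?thesis
    using j(2) by simp
qed

lemma butterfly_decompose:
  assumes "butterfly n A"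
  obtains i C where "C \<subseteq> {2..<i+2}" "A = C \<union> {i+2, i+3, i+4}"
    "\<Sum>C + (3*i+9) = n" "parts A ! 1 = i + 3"
proof -
  let ?L = "parts A"
  have fin: "finite A" and card: "card A \<ge> 3"
    using assms by (auto simp: butterfly_def distinct_partitions_def)
  obtain a b c rest where L: "?L = a # b # c # rest"
    using card length_parts[of A] by (metis Suc_le_length_iff numeral_3_eq_3)
  have "a = b + 1" "a = c + 2"
    using assms L by (simp_all add: butterfly_def)
  have "c \<ge> 2" and "\<forall>y\<in>set rest. y \<ge> 2"
    using butterfly_parts_ge2[OF assms] set_parts[OF fin] L by auto
  moreover have "\<forall>y\<in>set rest. y < c"
    using sorted_wrt_parts[of A] L by simp
  ultimately have C: "set rest \<subseteq> {2..<(c - 2) + 2}"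
    by auto
  moreover have A: "A = set rest \<union> {(c - 2) + 2, (c - 2) + 3, (c - 2) + 4}"
    using set_parts[OF fin] L \<open>a = c + 2\<close> \<open>a = b + 1\<close> \<open>c \<ge> 2\<close> by auto
  moreover have "\<Sum>(set rest) + (3*(c - 2)+9) = n"
    using assms butterfly_union_top3_iff[OF C] A by simp
  moreover have "?L ! 1 = (c - 2) + 3"
    using L \<open>a = c + 2\<close> \<open>a = b + 1\<close> \<open>c \<ge> 2\<close> by simp
  ultimately show ?thesis
    using that by blast
qed

lemma butterflies_with_p2:
  "{A. butterfly n A \<and> parts A ! 1 = i + 3}
     = (\<lambda>C. C \<union> {i+2, i+3, i+4}) ` {C\<in>Pow {2..<i+2}. \<Sum>C + (3*i+9) = n}"
proof (intro equalityI subsetI)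
  fix A assume "A \<in> {A. butterfly n A \<and> parts A ! 1 = i + 3}"
  then have A: "butterfly n A" "parts A ! 1 = i + 3"
    by auto
  obtain j C where C: "C \<subseteq> {2..<j+2}" "A = C \<union> {j+2, j+3, j+4}"
    "\<Sum>C + (3*j+9) = n" "parts A ! 1 = j + 3"
    using butterfly_decompose[OF A(1)] by blast
  with A(2) have "j = i"
    by simp
  with C show "A \<in> (\<lambda>C. C \<union> {i+2, i+3, i+4}) ` {C\<in>Pow {2..<i+2}. \<Sum>C + (3*i+9) = n}"
    by blast
next
  fix A assume "A \<in> (\<lambda>C. C \<union> {i+2, i+3, i+4}) ` {C\<in>Pow {2..<i+2}. \<Sum>C + (3*i+9) = n}"
  then obtain C where "C \<subseteq> {2..<i+2}" "\<Sum>C + (3*i+9) = n" "A = C \<union> {i+2, i+3, i+4}"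
    by auto
  moreover have "C \<subseteq> {..<i+2}"
    using \<open>C \<subseteq> {2..<i+2}\<close> by auto
  ultimately show "A \<in> {A. butterfly n A \<and> parts A ! 1 = i + 3}"
    using butterfly_union_top3_iff parts_union_top3[of C i] by simp
qed

lemma card_butterflies_with_p2:
  "card {A. butterfly n A \<and> parts A ! 1 = i + 3} = card {C\<in>Pow {2..<i+2}. \<Sum>C + (3*i+9) = n}"
proof -
  have "inj_on (\<lambda>C. C \<union> {i+2, i+3, i+4}) (Pow {2..<i+2})"
  proof (rule inj_onI)
    fix C D assume C: "C \<in> Pow {2..<i+2}" and D: "D \<in> Pow {2..<i+2}"
      and eq: "C \<union> {i+2, i+3, i+4} = D \<union> {i+2, i+3, i+4}"
    have "C = (C \<union> {i+2, i+3, i+4}) - {i+2, i+3, i+4}"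
      using C by auto
    also have "\<dots> = D"
      using D unfolding eq by auto
    finally show "C = D" .
  qed
  then show ?thesis
    unfolding butterflies_with_p2 by (rule card_image[OF inj_on_subset]) auto
qed

lemma s_e_eq_sum_butterflies:
  "s_e n = (\<Sum>i\<in>{i. i < n \<and> odd i}. card {A. butterfly n A \<and> parts A ! 1 = i + 3})"
proof -
  have parts_even: "{A. butterfly n A \<and> even (parts A ! 1)}
      = (\<Union>i\<in>{i. i < n \<and> odd i}. {A. butterfly n A \<and> parts A ! 1 = i + 3})"
  proof (intro equalityI subsetI)
    fix A assume "A \<in> {A. butterfly n A \<and> even (parts A ! 1)}"
    then have A: "butterfly n A" "even (parts A ! 1)"
      by auto
    obtain i C where "\<Sum>C + (3*i+9) = n" "parts A ! 1 = i + 3"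
      using butterfly_decompose[OF A(1)] by blast
    with A(2) show "A \<in> (\<Union>i\<in>{i. i < n \<and> odd i}. {A. butterfly n A \<and> parts A ! 1 = i + 3})"
      using A(1) by auto
  qed auto
  have "finite {A. butterfly n A \<and> parts A ! 1 = i + 3}" for i
    unfolding butterflies_with_p2 by simp
  then show ?thesis
    unfolding s_e_def parts_even by (intro card_UN_disjoint) auto
qed

lemma s_eq_sum_butterflies:
  assumes "6 \<le> n"
  shows "s (int n) = (\<Sum>i<n. int (card {A. butterfly n A \<and> parts A ! 1 = i + 3}))"
  unfolding s_eq_sum_butterfly_coeffs[OF assms] coeff_monom_mult_distinct_gf card_butterflies_with_p2
  by (simp add: add.commute)

lemma alt_sum_butterflies:
  assumes "1 \<le> n"
  shows "(\<Sum>i<n. (-1)^i * int (card {A. butterfly n A \<and> parts A ! 1 = i + 3}))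
    = of_bool (n = 9) + of_bool (n \<in> range (\<lambda>u. pent_exp 3 u + u + 17))
      + of_bool (n \<in> range (\<lambda>u. pent_exp 3 u + u + 15))
      - of_bool (n \<in> range (\<lambda>u. pent_exp 3 u + 12))
      - of_bool (n \<in> range (\<lambda>u. pent_exp 3 u + 14))"
  using alt_sum_butterfly_coeffs[OF assms]
  unfolding coeff_monom_mult_distinct_gf card_butterflies_with_p2
  by (simp add: add.commute)

section \<open>The exceptional values\<close>

definition P14_values :: "nat set" where
  "P14_values = {n. \<exists>t::int. t \<ge> 2 \<and> (int n = P1 t \<or> int n = P4 t)}"

definition P23_values :: "nat set" where
  "P23_values = {n. \<exists>t::int. t \<ge> 2 \<and> (int n = P2 t \<or> int n = P3 t)}"

lemma values_eq_range:
  assumes "\<And>u. P (int u + int k) = int (f u)"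
  shows "{n. \<exists>t. t \<ge> int k \<and> int n = P t} = range f"
proof (intro equalityI subsetI)
  fix n assume "n \<in> {n. \<exists>t. t \<ge> int k \<and> int n = P t}"
  then obtain t where "t \<ge> int k" "int n = P t"
    by blast
  then have "int n = int (f (nat (t - int k)))"
    using assms[of "nat (t - int k)"] by simp
  then show "n \<in> range f"
    by (metis of_nat_eq_iff rangeI)
next
  fix n assume "n \<in> range f"
  then obtain u where "n = f u"
    by blast
  then show "n \<in> {n. \<exists>t. t \<ge> int k \<and> int n = P t}"
    using assms[of u] by (intro CollectI exI[of _ "int u + int k"]) simp
qed

lemma P_values_pent_exp:
  "P1 2 = 9"
  "P1 (int u + 3) = int (pent_exp 3 u + u + 17)"
  "P2 (int u + 2) = int (pent_exp 3 u + 12)"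
  "P3 (int u + 2) = int (pent_exp 3 u + 14)"
  "P4 (int u + 2) = int (pent_exp 3 u + u + 15)"
  using pent_exp_closed_form[of 3 u]
  by (simp_all add: P1_def P2_def P3_def P4_def power2_eq_square algebra_simps)

lemma P14_values_eq:
  "P14_values
    = insert 9 (range (\<lambda>u. pent_exp 3 u + u + 17) \<union> range (\<lambda>u. pent_exp 3 u + u + 15))"
proof -
  have "t \<ge> 2 \<longleftrightarrow> t = 2 \<or> t \<ge> int 3" for t :: int
    by auto
  then have "{n. \<exists>t::int. t \<ge> 2 \<and> int n = P1 t}
      = insert 9 {n. \<exists>t. t \<ge> int 3 \<and> int n = P1 t}"
    using P_values_pent_exp(1) by auto
  moreover have "{n. \<exists>t. t \<ge> int 3 \<and> int n = P1 t} = range (\<lambda>u. pent_exp 3 u + u + 17)"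
    by (rule values_eq_range) (simp add: P_values_pent_exp)
  moreover have "{n. \<exists>t. t \<ge> int 2 \<and> int n = P4 t} = range (\<lambda>u. pent_exp 3 u + u + 15)"
    by (rule values_eq_range) (simp add: P_values_pent_exp)
  ultimately show ?thesis
    unfolding P14_values_def by auto
qed

lemma P23_values_eq:
  "P23_values = range (\<lambda>u. pent_exp 3 u + 12) \<union> range (\<lambda>u. pent_exp 3 u + 14)"
proof -
  have "{n. \<exists>t. t \<ge> int 2 \<and> int n = P2 t} = range (\<lambda>u. pent_exp 3 u + 12)"
    by (rule values_eq_range) (simp add: P_values_pent_exp)
  moreover have "{n. \<exists>t. t \<ge> int 2 \<and> int n = P3 t} = range (\<lambda>u. pent_exp 3 u + 14)"
    by (rule values_eq_range) (simp add: P_values_pent_exp)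
  ultimately show ?thesis
    unfolding P23_values_def by auto
qed

lemma pent_exp_values_distinct:
  "pent_exp 3 u + 12 \<noteq> pent_exp 3 v + 14" "pent_exp 3 u + 12 \<noteq> pent_exp 3 v + v + 15"
  "pent_exp 3 u + 12 \<noteq> pent_exp 3 v + v + 17" "pent_exp 3 u + 14 \<noteq> pent_exp 3 v + v + 15"
  "pent_exp 3 u + 14 \<noteq> pent_exp 3 v + v + 17" "pent_exp 3 u + u + 15 \<noteq> pent_exp 3 v + v + 17"
  by (cases u v rule: linorder_cases; use pent_exp_gap[of u v 3] pent_exp_gap[of v u 3] in simp)+

lemma P14_P23_disjoint: "P14_values \<inter> P23_values = {}"
  unfolding P14_values_eq P23_values_eq
  using pent_exp_values_distinct pent_exp_values_distinct[THEN not_sym] by auto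

lemma alt_sum_butterflies_eq_P_values:
  assumes "1 \<le> n"
  shows "(\<Sum>i<n. (-1)^i * int (card {A. butterfly n A \<and> parts A ! 1 = i + 3}))
    = of_bool (n \<in> P14_values) - of_bool (n \<in> P23_values)"
proof -
  have "of_bool (n = 9) + of_bool (n \<in> range (\<lambda>u. pent_exp 3 u + u + 17))
      + of_bool (n \<in> range (\<lambda>u. pent_exp 3 u + u + 15)) = (of_bool (n \<in> P14_values) :: int)"
    unfolding P14_values_eq
    using pent_exp_values_distinct(6) pent_exp_values_distinct(6)[THEN not_sym] by auto
  moreover have "of_bool (n \<in> range (\<lambda>u. pent_exp 3 u + 12))
      + of_bool (n \<in> range (\<lambda>u. pent_exp 3 u + 14)) = (of_bool (n \<in> P23_values) :: int)"
    unfolding P23_values_eq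
    using pent_exp_values_distinct(1) pent_exp_values_distinct(1)[THEN not_sym] by auto
  ultimately show ?thesis
    unfolding alt_sum_butterflies[OF assms] by linarith
qed

lemma s_eq_twice_s_e_plus_correction:
  assumes "6 \<le> n"
  shows "s (int n) = 2 * int (s_e n) + of_bool (n \<in> P14_values) - of_bool (n \<in> P23_values)"
proof -
  define W where "W i = int (card {A. butterfly n A \<and> parts A ! 1 = i + 3})" for i
  have "s (int n) = (\<Sum>i<n. W i)"
    unfolding W_def by (rule s_eq_sum_butterflies[OF assms])
  also have "\<dots> = (\<Sum>i<n. (-1)^i * W i + 2 * (of_bool (odd i) * W i))"
  proof (rule sum.cong[OF refl])
    show "W i = (-1)^i * W i + 2 * (of_bool (odd i) * W i)" for i
      by (cases "even i") simp_all
  qed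
  also have "\<dots> = (\<Sum>i<n. (-1)^i * W i) + 2 * (\<Sum>i<n. of_bool (odd i) * W i)"
    by (simp only: sum.distrib sum_distrib_left)
  also have "(\<Sum>i<n. of_bool (odd i) * W i) = int (s_e n)"
    by (simp add: s_e_eq_sum_butterflies W_def Int_def)
  also have "(\<Sum>i<n. (-1)^i * W i) = of_bool (n \<in> P14_values) - of_bool (n \<in> P23_values)"
    unfolding W_def using assms by (intro alt_sum_butterflies_eq_P_values) simp
  finally show ?thesis
    by simp
qed

theorem corollary4p7:
  fixes n :: nat
  assumes "n \<ge> 6"
  shows "((\<forall>t::int. t \<ge> 2 \<longrightarrow> int n \<notin> {P1 t, P2 t, P3 t, P4 t})
            \<longrightarrow> s (int n) = 2 * int (s_e n) \<and> even (s (int n)))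
       \<and> ((\<exists>t::int. t \<ge> 2 \<and> (int n = P1 t \<or> int n = P4 t))
            \<longrightarrow> s (int n) = 2 * int (s_e n) + 1 \<and> odd (s (int n)))
       \<and> ((\<exists>t::int. t \<ge> 2 \<and> (int n = P2 t \<or> int n = P3 t))
            \<longrightarrow> s (int n) = 2 * int (s_e n) - 1 \<and> odd (s (int n)))"
proof -
  have none: "(\<forall>t::int. t \<ge> 2 \<longrightarrow> int n \<notin> {P1 t, P2 t, P3 t, P4 t})
      \<longleftrightarrow> n \<notin> P14_values \<and> n \<notin> P23_values"
    by (auto simp: P14_values_def P23_values_def)
  have P14: "(\<exists>t::int. t \<ge> 2 \<and> (int n = P1 t \<or> int n = P4 t)) \<longleftrightarrow> n \<in> P14_values"
    by (simp add: P14_values_def)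
  have P23: "(\<exists>t::int. t \<ge> 2 \<and> (int n = P2 t \<or> int n = P3 t)) \<longleftrightarrow> n \<in> P23_values"
    by (simp add: P23_values_def)
  show ?thesis
    unfolding none P14 P23 s_eq_twice_s_e_plus_correction[OF assms]
    using P14_P23_disjoint by auto
qed

end
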